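(* If a formula $\varphi$ is satisfiable in a PWK-Kripke model, then it is satisfiable in a PWK-Kripke model $(W,R,v)$ with $W$ finite.
   Context: Formulas are built from a countably infinite set of propositional variables and the constants $0,1$ using the unary connectives $\neg$, $J_2$, $\Box$ and the binary connective $\vee$. Let $\mathbf{WK}^e$ be the algebra on $\{0,\tfrac12,1\}$ with $\neg0=1$, $\neg1=0$, $\neg\tfrac12=\tfrac12$; $a\vee b=\tfrac12$ if $a=\tfrac12$ or $b=\tfrac12$, otherwise $a\vee b=\max(a,b)$; $J_2(1)=1$, $J_2(\tfrac12)=J_2(0)=0$. A PWK-Kripke model is a triple $(W,R,v)$ with $W\neq\emptyset$, $R\subseteq W\times W$, $v:W\times\mathrm{Fm}\to\{0,\tfrac12,1\}$ such that for each $w$, $v(w,\cdot)$ commutes with $\neg,\vee,J_2,0,1$ as computed in $\mathbf{WK}^e$, and: $v(w,\Box\varphi)=\tfrac12$ iff $v(w,\varphi)=\tfrac12$; $v(w,\Box\varphi)=1$ iff $v(w,\varphi)\neq\tfrac12$ and $v(s,\varphi)\neq0$ for all $s$ with $wRs$; $v(w,\Box\varphi)=0$ iff $v(w,\varphi)\neq\tfrac12$ and $v(s,\varphi)=0$ for some $s$ with $wRs$. A formula $\varphi$ is satisfiable in a PWK-Kripke model $(W,R,v)$ if $v(w,\varphi)\neq0$ for some $w\in W$. *)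

theory Defs
  imports Main
begin

datatype fm = Var nat | Zero | One | Neg fm | J2 fm | Box fm | Disj fm fm

text \<open>Truth values of WK^e: F = 0, H = 1/2, T = 1.\<close>
datatype wk = F | H | T

fun wk_neg :: "wk \<Rightarrow> wk" where
  "wk_neg F = T" | "wk_neg T = F" | "wk_neg H = H"

fun wk_rank :: "wk \<Rightarrow> nat" where
  "wk_rank F = 0" | "wk_rank H = 1" | "wk_rank T = 2"

definition wk_or :: "wk \<Rightarrow> wk \<Rightarrow> wk" where
  "wk_or a b = (if a = H \<or> b = H then H
                else if wk_rank a \<le> wk_rank b then b else a)"

fun wk_J2 :: "wk \<Rightarrow> wk" where
  "wk_J2 T = T" | "wk_J2 H = F" | "wk_J2 F = F"

definition pwk_model :: "'w set \<Rightarrow> ('w \<times> 'w) set \<Rightarrow> ('w \<Rightarrow> fm \<Rightarrow> wk) \<Rightarrow> bool" where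
  "pwk_model W R v \<longleftrightarrow> W \<noteq> {} \<and> R \<subseteq> W \<times> W \<and>
    (\<forall>w\<in>W.
       v w Zero = F \<and> v w One = T \<and>
       (\<forall>\<phi>. v w (Neg \<phi>) = wk_neg (v w \<phi>)) \<and>
       (\<forall>\<phi> \<psi>. v w (Disj \<phi> \<psi>) = wk_or (v w \<phi>) (v w \<psi>)) \<and>
       (\<forall>\<phi>. v w (J2 \<phi>) = wk_J2 (v w \<phi>)) \<and>
       (\<forall>\<phi>. (v w (Box \<phi>) = H \<longleftrightarrow> v w \<phi> = H) \<and>
             (v w (Box \<phi>) = T \<longleftrightarrow> v w \<phi> \<noteq> H \<and> (\<forall>s\<in>W. (w, s) \<in> R \<longrightarrow> v s \<phi> \<noteq> F)) \<and>
             (v w (Box \<phi>) = F \<longleftrightarrow> v w \<phi> \<noteq> H \<and> (\<exists>s\<in>W. (w, s) \<in> R \<and> v s \<phi> = F))))"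

definition satisfiable_in :: "fm \<Rightarrow> 'w set \<Rightarrow> ('w \<times> 'w) set \<Rightarrow> ('w \<Rightarrow> fm \<Rightarrow> wk) \<Rightarrow> bool" where
  "satisfiable_in \<phi> W R v \<longleftrightarrow> (\<exists>w\<in>W. v w \<phi> \<noteq> F)"

end

theory Submission
  imports Defs "HOL-Library.FuncSet"
begin

text \<open>The proof is a filtration. Identify two worlds when they give the same values to all
  subformulas of \<open>\<phi>\<close>; since there are only three truth values and finitely many subformulas,
  there are finitely many classes. On the classes take the image of \<open>R\<close> and evaluate
  compositionally from the atoms. Truth of every subformula is preserved: for \<open>\<box>\<psi>\<close> the
  nontrivial direction uses that all worlds in the class of \<open>w\<close> agree with \<open>w\<close> on \<open>\<box>\<psi>\<close>,
  so an \<open>R\<close>-successor refuting \<open>\<psi>\<close> of any member of the class refutes \<open>\<box>\<psi>\<close> at \<open>w\<close> itself.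
  Finally the finitely many classes are renamed into natural numbers.\<close>

fun kripke_eval :: "'w set \<Rightarrow> ('w \<times> 'w) set \<Rightarrow> ('w \<Rightarrow> nat \<Rightarrow> wk) \<Rightarrow> 'w \<Rightarrow> fm \<Rightarrow> wk" where
  "kripke_eval W R V w (Var n) = V w n"
| "kripke_eval W R V w Zero = F"
| "kripke_eval W R V w One = T"
| "kripke_eval W R V w (Neg p) = wk_neg (kripke_eval W R V w p)"
| "kripke_eval W R V w (J2 p) = wk_J2 (kripke_eval W R V w p)"
| "kripke_eval W R V w (Disj p q) = wk_or (kripke_eval W R V w p) (kripke_eval W R V w q)"
| "kripke_eval W R V w (Box p) =
     (if kripke_eval W R V w p = H then H
      else if \<forall>s\<in>W. (w, s) \<in> R \<longrightarrow> kripke_eval W R V s p \<noteq> F then T else F)"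

lemma pwk_model_kripke_eval:
  assumes "W \<noteq> {}" and "R \<subseteq> W \<times> W"
  shows "pwk_model W R (kripke_eval W R V)"
  using assms unfolding pwk_model_def by auto

lemma pwk_modelI:
  assumes "W \<noteq> {}" and "R \<subseteq> W \<times> W"
    and "\<And>w p q. w \<in> W \<Longrightarrow>
      v w Zero = F \<and> v w One = T \<and>
      v w (Neg p) = wk_neg (v w p) \<and>
      v w (J2 p) = wk_J2 (v w p) \<and>
      v w (Disj p q) = wk_or (v w p) (v w q) \<and>
      v w (Box p) = (if v w p = H then H else if \<forall>s\<in>W. (w, s) \<in> R \<longrightarrow> v s p \<noteq> F then T else F)"
  shows "pwk_model W R v"
  using assms unfolding pwk_model_def by auto

lemma pwk_model_simps:
  assumes "pwk_model W R v" and "w \<in> W"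
  shows "v w Zero = F" and "v w One = T"
    and "v w (Neg p) = wk_neg (v w p)"
    and "v w (J2 p) = wk_J2 (v w p)"
    and "v w (Disj p q) = wk_or (v w p) (v w q)"
    and "v w (Box p) =
      (if v w p = H then H else if \<forall>s\<in>W. (w, s) \<in> R \<longrightarrow> v s p \<noteq> F then T else F)"
  using assms unfolding pwk_model_def by (cases "v w (Box p)"; auto)+

fun subformulas :: "fm \<Rightarrow> fm set" where
  "subformulas (Var n) = {Var n}"
| "subformulas Zero = {Zero}"
| "subformulas One = {One}"
| "subformulas (Neg p) = insert (Neg p) (subformulas p)"
| "subformulas (J2 p) = insert (J2 p) (subformulas p)"
| "subformulas (Box p) = insert (Box p) (subformulas p)"
| "subformulas (Disj p q) = insert (Disj p q) (subformulas p \<union> subformulas q)"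

lemma finite_subformulas: "finite (subformulas p)"
  by (induction p) auto

lemma subformulas_refl: "p \<in> subformulas p"
  by (cases p) auto

lemma finite_UNIV_wk: "finite (UNIV :: wk set)"
proof (rule finite_subset)
  show "(UNIV :: wk set) \<subseteq> {F, H, T}"
    using wk.exhaust by blast
qed simp

text \<open>The class of a world in the filtration through \<open>S\<close> is represented by its valuation
  restricted to \<open>S\<close>.\<close>

definition filtration_point :: "('w \<Rightarrow> fm \<Rightarrow> wk) \<Rightarrow> fm set \<Rightarrow> 'w \<Rightarrow> fm \<Rightarrow> wk" where
  "filtration_point v S w = restrict (v w) S"

lemma finite_filtration_points:
  assumes "finite S"
  shows "finite (filtration_point v S ` W)"
proof (rule finite_subset)
  show "filtration_point v S ` W \<subseteq> (\<Pi>\<^sub>E q\<in>S. UNIV)"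
    unfolding filtration_point_def by auto
  show "finite (\<Pi>\<^sub>E q\<in>S. (UNIV :: wk set))"
    using assms finite_UNIV_wk by (intro finite_PiE) auto
qed

lemma filtration_point_eqD:
  assumes "filtration_point v S a = filtration_point v S b" and "q \<in> S"
  shows "v a q = v b q"
  using assms unfolding filtration_point_def by (metis restrict_apply')

lemma kripke_eval_filtration:
  fixes v :: "'w \<Rightarrow> fm \<Rightarrow> wk" and S :: "fm set"
  defines "tp \<equiv> filtration_point v S"
  assumes model: "pwk_model W R v" and "w \<in> W" and "subformulas p \<subseteq> S"
  shows "kripke_eval (tp ` W) (map_prod tp tp ` R) (\<lambda>t n. t (Var n)) (tp w) p = v w p"
  using assms(3,4)
proof (induction p arbitrary: w)
  case (Var n)
  then show ?case by (simp add: tp_def filtration_point_def)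
next
  case (Box p)
  let ?ev = "kripke_eval (tp ` W) (map_prod tp tp ` R) (\<lambda>t n. t (Var n))"
  have IH: "?ev (tp u) p = v u p" if "u \<in> W" for u
    using Box that by simp
  have R_sub: "R \<subseteq> W \<times> W"
    using model unfolding pwk_model_def by blast
  have "(\<forall>s\<in>tp ` W. (tp w, s) \<in> map_prod tp tp ` R \<longrightarrow> ?ev s p \<noteq> F)
        \<longleftrightarrow> (\<forall>s\<in>W. (w, s) \<in> R \<longrightarrow> v s p \<noteq> F)" if "v w p \<noteq> H"
  proof
    assume "\<forall>s\<in>tp ` W. (tp w, s) \<in> map_prod tp tp ` R \<longrightarrow> ?ev s p \<noteq> F"
    then show "\<forall>s\<in>W. (w, s) \<in> R \<longrightarrow> v s p \<noteq> F"
      using IH by force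
  next
    assume succ: "\<forall>s\<in>W. (w, s) \<in> R \<longrightarrow> v s p \<noteq> F"
    show "\<forall>s\<in>tp ` W. (tp w, s) \<in> map_prod tp tp ` R \<longrightarrow> ?ev s p \<noteq> F"
    proof (intro ballI impI)
      fix s
      assume "(tp w, s) \<in> map_prod tp tp ` R"
      then obtain a b where ab: "(a, b) \<in> R" "tp a = tp w" "s = tp b"
        by auto
      with R_sub have "a \<in> W" "b \<in> W" by auto
      have "v w (Box p) = T"
        using pwk_model_simps(6)[OF model Box.prems(1)] that succ by simp
      moreover have "v a (Box p) = v w (Box p)" and "v a p = v w p"
        using ab(2) Box.prems(2) subformulas_refl[of p]
        by (auto simp: tp_def intro: filtration_point_eqD)
      ultimately have "v b p \<noteq> F"
        using pwk_model_simps(6)[OF model \<open>a \<in> W\<close>] ab(1) \<open>b \<in> W\<close>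
        by (auto split: if_splits)
      then show "?ev s p \<noteq> F"
        using IH[OF \<open>b \<in> W\<close>] ab(3) by simp
    qed
  qed
  then show ?case
    using IH[OF Box.prems(1)] pwk_model_simps(6)[OF model Box.prems(1)] by simp
qed (use model in \<open>auto simp: pwk_model_simps\<close>)

lemma pwk_model_rename:
  assumes model: "pwk_model W R v" and inj: "inj_on g W"
  shows "pwk_model (g ` W) (map_prod g g ` R) (\<lambda>x. v (inv_into W g x))"
proof -
  have R_sub: "R \<subseteq> W \<times> W"
    using model unfolding pwk_model_def by blast
  have edge_iff: "(g a, g b) \<in> map_prod g g ` R \<longleftrightarrow> (a, b) \<in> R" if "a \<in> W" "b \<in> W" for a b
    using that R_sub inj by (auto dest: inj_onD)
  show ?thesis
  proof (rule pwk_modelI)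
    show "g ` W \<noteq> {}" and "map_prod g g ` R \<subseteq> g ` W \<times> g ` W"
      using model R_sub unfolding pwk_model_def by auto
  next
    fix x p q
    assume "x \<in> g ` W"
    then obtain w where "w \<in> W" and x: "x = g w" by blast
    let ?v = "\<lambda>x. v (inv_into W g x)"
    have succ_iff: "(\<forall>s\<in>g ` W. (x, s) \<in> map_prod g g ` R \<longrightarrow> ?v s p \<noteq> F)
        \<longleftrightarrow> (\<forall>s\<in>W. (w, s) \<in> R \<longrightarrow> v s p \<noteq> F)"
      using edge_iff \<open>w \<in> W\<close> inj by (auto simp: x)
    show "?v x Zero = F \<and> ?v x One = T \<and>
      ?v x (Neg p) = wk_neg (?v x p) \<and>
      ?v x (J2 p) = wk_J2 (?v x p) \<and>
      ?v x (Disj p q) = wk_or (?v x p) (?v x q) \<and>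
      ?v x (Box p) = (if ?v x p = H then H
        else if \<forall>s\<in>g ` W. (x, s) \<in> map_prod g g ` R \<longrightarrow> ?v s p \<noteq> F then T else F)"
      unfolding succ_iff using \<open>w \<in> W\<close> inj by (simp add: x pwk_model_simps[OF model])
  qed
qed

lemma finite_pwk_model_on_nat:
  fixes W :: "'a set"
  assumes "finite W" and model: "pwk_model W R v" and sat: "satisfiable_in \<phi> W R v"
  shows "\<exists>(W' :: nat set) R' v'. finite W' \<and> pwk_model W' R' v' \<and> satisfiable_in \<phi> W' R' v'"
proof -
  obtain g :: "'a \<Rightarrow> nat" where inj: "inj_on g W"
    using finite_imp_inj_to_nat_seg[OF assms(1)] by blast
  let ?v = "\<lambda>x. v (inv_into W g x)"
  have "finite (g ` W)"
    using assms(1) by simp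
  moreover have "pwk_model (g ` W) (map_prod g g ` R) ?v"
    using model inj by (rule pwk_model_rename)
  moreover have "satisfiable_in \<phi> (g ` W) (map_prod g g ` R) ?v"
    using sat inj unfolding satisfiable_in_def by auto
  ultimately show ?thesis by blast
qed

theorem mainTheorem12:
  fixes \<phi> :: fm and W :: "'w set" and R :: "('w \<times> 'w) set" and v :: "'w \<Rightarrow> fm \<Rightarrow> wk"
  assumes "pwk_model W R v" and "satisfiable_in \<phi> W R v"
  shows "\<exists>(W' :: nat set) R' v'. finite W' \<and> pwk_model W' R' v' \<and> satisfiable_in \<phi> W' R' v'"
proof -
  define tp where "tp = filtration_point v (subformulas \<phi>)"
  define W1 where "W1 = tp ` W"
  define R1 where "R1 = map_prod tp tp ` R"
  define v1 where "v1 = kripke_eval W1 R1 (\<lambda>t n. t (Var n))"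
  have "W \<noteq> {}" and "R \<subseteq> W \<times> W"
    using assms(1) unfolding pwk_model_def by auto
  then have "pwk_model W1 R1 v1"
    unfolding v1_def W1_def R1_def by (intro pwk_model_kripke_eval) auto
  moreover have "finite W1"
    unfolding W1_def tp_def using finite_subformulas by (rule finite_filtration_points)
  moreover have "satisfiable_in \<phi> W1 R1 v1"
  proof -
    obtain w where "w \<in> W" and "v w \<phi> \<noteq> F"
      using assms(2) unfolding satisfiable_in_def by blast
    moreover have "v1 (tp w) \<phi> = v w \<phi>"
      unfolding v1_def W1_def R1_def tp_def
      using assms(1) \<open>w \<in> W\<close> by (rule kripke_eval_filtration) simp
    ultimately show ?thesis
      unfolding satisfiable_in_def W1_def by (metis image_eqI)
  qed
  ultimately show ?thesis
    by (intro finite_pwk_model_on_nat)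
qed

end
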